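(* Let $(a_n)_{n\ge0}$ be given by $a_n=1$ if $n+1$ is a power of $2$ and $a_n=0$ otherwise. Let $m$ and $K\ge0$ be integers with $1\le 2^K<m\le 2^{K+1}$, and for $n\ge0$ let $d(n,m)=\det\left(a_{i+j+m}\right)_{i,j=0}^{n-1}$ (with $d(0,m)=1$). Then $d(n,m)\in\{1,-1\}$ if $n\equiv 0\pmod{2^{K+1}}$ or $n\equiv -m\pmod{2^{K+1}}$, and $d(n,m)=0$ otherwise. *)

theory Defs
  imports "Jordan_Normal_Form.Determinant" "HOL-Number_Theory.Cong"
begin

definition a_seq :: "nat \<Rightarrow> int" where
  "a_seq n = (if \<exists>k::nat. n + 1 = 2 ^ k then 1 else 0)"

definition hankel_d :: "nat \<Rightarrow> nat \<Rightarrow> int" where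
  "hankel_d n m = det (mat n n (\<lambda>(i, j). a_seq (i + j + m)))"

end

theory Submission
  imports Defs
begin

text \<open>Since \<open>a (2u+1) = a u\<close> and \<open>a (2u) = 0\<close> for \<open>u > 0\<close>, listing the rows and columns of the
  Hankel matrix by parity makes it block triangular, with diagonal blocks that are again Hankel
  matrices of \<open>a\<close> of about half the size and with about half the shift.  This gives recursions
  for \<open>\<bar>d(n,m)\<bar>\<close> in the parities of \<open>n\<close> and \<open>m\<close>, and the divisibility condition
  \<open>2^e dvd n \<or> 2^e dvd n + m\<close> obeys the same recursions.\<close>

lemma abs_det_permute_rows_cols:
  fixes A :: "'a :: linordered_idom mat"
  assumes A: "A \<in> carrier_mat n n" and p: "p permutes {0..<n}" and q: "q permutes {0..<n}"
  shows "\<bar>det (mat n n (\<lambda>(i,j). A $$ (p i, q j)))\<bar> = \<bar>det A\<bar>"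
proof -
  let ?B = "mat n n (\<lambda>(i,j). A $$ (p i, j))"
  let ?C = "mat n n (\<lambda>(i,j). transpose_mat ?B $$ (q i, j))"
  have "mat n n (\<lambda>(i,j). A $$ (p i, q j)) = transpose_mat ?C"
    by (rule eq_matI) (auto simp: permutes_nat_less[OF q])
  then have "det (mat n n (\<lambda>(i,j). A $$ (p i, q j))) = det ?C"
    using det_transpose[of ?C n] by simp
  also have "\<dots> = signof q * det ?B"
    using det_permute_rows[OF _ q, of "transpose_mat ?B"] det_transpose[of ?B n] by simp
  also have "\<dots> = signof q * (signof p * det A)"
    by (simp add: det_permute_rows[OF A p])
  finally show ?thesis
    by (cases p rule: sign_cases; cases q rule: sign_cases) (simp_all add: abs_mult)
qed

lemma abs_det_block_triangular:
  fixes A :: "'a :: linordered_idom mat"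
  assumes A: "A \<in> carrier_mat n n" and p: "p permutes {0..<n}" and q: "q permutes {0..<n}"
    and k: "k \<le> n"
    and zero: "\<And>i j. i < k \<Longrightarrow> k \<le> j \<Longrightarrow> j < n \<Longrightarrow> A $$ (p i, q j) = 0"
  shows "\<bar>det A\<bar> = \<bar>det (mat k k (\<lambda>(i,j). A $$ (p i, q j)))\<bar>
     * \<bar>det (mat (n-k) (n-k) (\<lambda>(i,j). A $$ (p (k+i), q (k+j))))\<bar>"
proof -
  let ?A1 = "mat k k (\<lambda>(i,j). A $$ (p i, q j))"
  let ?A3 = "mat (n-k) k (\<lambda>(i,j). A $$ (p (k+i), q j))"
  let ?A4 = "mat (n-k) (n-k) (\<lambda>(i,j). A $$ (p (k+i), q (k+j)))"
  have "mat n n (\<lambda>(i,j). A $$ (p i, q j)) = four_block_mat ?A1 (0\<^sub>m k (n-k)) ?A3 ?A4"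
    by (rule eq_matI) (auto simp: four_block_mat_def Let_def k zero)
  moreover have "det (four_block_mat ?A1 (0\<^sub>m k (n-k)) ?A3 ?A4) = det ?A1 * det ?A4"
    by (rule det_four_block_mat_upper_right_zero) auto
  ultimately show ?thesis
    using abs_det_permute_rows_cols[OF A p q] by (simp add: abs_mult)
qed

lemma det_eq_0_if_rows_in_fewer_columns:
  assumes A: "A \<in> carrier_mat n n" and R: "R \<subseteq> {0..<n}" and C: "finite C" "card C < card R"
    and zero: "\<And>i j. i \<in> R \<Longrightarrow> j < n \<Longrightarrow> j \<notin> C \<Longrightarrow> A $$ (i, j) = 0"
  shows "det A = 0"
proof -
  have "(\<Prod>j<n. A $$ (p j, j)) = 0" if p: "p permutes {0..<n}" for p
  proof -
    let ?J = "{j. j < n \<and> p j \<in> R}"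
    have "R \<subseteq> p ` ?J"
    proof
      fix i assume "i \<in> R"
      then have "i \<in> p ` {0..<n}" using R permutes_image[OF p] by auto
      then show "i \<in> p ` ?J" using \<open>i \<in> R\<close> by auto
    qed
    then have "card R \<le> card (p ` ?J)"
      by (intro card_mono) auto
    also have "\<dots> \<le> card ?J"
      by (intro card_image_le) auto
    finally have "\<not> ?J \<subseteq> C"
      using C card_mono[of C ?J] by linarith
    then obtain j where "j < n" "p j \<in> R" "j \<notin> C" by blast
    then show ?thesis
      using zero by (intro prod_zero) auto
  qed
  then show ?thesis
    by (simp add: det_col[OF A])
qed

lemma det_unit_column:
  fixes A :: "'a :: comm_ring_1 mat"
  assumes A: "A \<in> carrier_mat n n" and r: "r < n" and j: "j < n"
    and unit: "\<And>i. i < n \<Longrightarrow> A $$ (i, j) = (if i = r then 1 else 0)"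
  shows "det A = (-1) ^ (r + j) * det (mat_delete A r j)"
proof -
  have "det A = (\<Sum>i<n. if i = r then cofactor A r j else 0)"
    unfolding laplace_expansion_column[OF A j] by (rule sum.cong) (auto simp: unit)
  then show ?thesis
    using r by (simp add: cofactor_def)
qed

lemma permutes_atLeastLessThanI:
  assumes "\<And>i. i < n \<Longrightarrow> p i < n" "inj_on p {0..<n}" "\<And>i. n \<le> i \<Longrightarrow> p i = i"
  shows "p permutes {0..<(n::nat)}"
proof (rule bij_imp_permutes)
  have "p ` {0..<n} = {0..<n}"
    using assms(1,2) by (intro endo_inj_surj) auto
  then show "bij_betw p {0..<n} {0..<n}"
    using assms(2) by (simp add: bij_betw_def)
qed (use assms(3) in auto)

definition evens_first :: "nat \<Rightarrow> nat \<Rightarrow> nat" where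
  "evens_first n i =
     (if i < n then if i < (n + 1) div 2 then 2 * i else 2 * (i - (n + 1) div 2) + 1 else i)"

definition odds_first :: "nat \<Rightarrow> nat \<Rightarrow> nat" where
  "odds_first n i = (if i < n then if i < n div 2 then 2 * i + 1 else 2 * (i - n div 2) else i)"

lemma evens_first_permutes: "evens_first n permutes {0..<n}"
  by (rule permutes_atLeastLessThanI)
    (auto simp: evens_first_def inj_on_def split: if_splits; presburger)+

lemma odds_first_permutes: "odds_first n permutes {0..<n}"
  by (rule permutes_atLeastLessThanI)
    (auto simp: odds_first_def inj_on_def split: if_splits; presburger)+

lemma evens_first_less: "i < n \<Longrightarrow> evens_first n i < n"
  by (rule permutes_nat_less[OF evens_first_permutes])

lemma odds_first_less: "i < n \<Longrightarrow> odds_first n i < n"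
  by (rule permutes_nat_less[OF odds_first_permutes])

lemma evens_first_low: "i < (n + 1) div 2 \<Longrightarrow> evens_first n i = 2 * i"
  unfolding evens_first_def by auto

lemma evens_first_high: "k = (n + 1) div 2 \<Longrightarrow> k + j < n \<Longrightarrow> evens_first n (k + j) = 2 * j + 1"
  unfolding evens_first_def by auto

lemma odds_first_low: "i < n div 2 \<Longrightarrow> odds_first n i = 2 * i + 1"
  unfolding odds_first_def by auto

lemma odds_first_high: "k = n div 2 \<Longrightarrow> k + j < n \<Longrightarrow> odds_first n (k + j) = 2 * j"
  unfolding odds_first_def by auto

lemma a_seq_0 [simp]: "a_seq 0 = 1"
  unfolding a_seq_def by (auto intro: exI[of _ 0])

lemma a_seq_odd: "a_seq (2 * u + 1) = a_seq u"
proof -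
  have "(\<exists>k. 2 * u + 2 = (2::nat) ^ k) \<longleftrightarrow> (\<exists>k. u + 1 = (2::nat) ^ k)"
  proof
    assume "\<exists>k. 2 * u + 2 = (2::nat) ^ k"
    then obtain k where k: "2 * u + 2 = (2::nat) ^ k" by blast
    then obtain k' where "k = Suc k'" by (cases k) auto
    with k have "u + 1 = 2 ^ k'" by simp
    then show "\<exists>k. u + 1 = (2::nat) ^ k" by blast
  next
    assume "\<exists>k. u + 1 = (2::nat) ^ k"
    then obtain k where "u + 1 = (2::nat) ^ k" by blast
    then have "2 * u + 2 = 2 ^ Suc k" by simp
    then show "\<exists>k. 2 * u + 2 = (2::nat) ^ k" by blast
  qed
  then show ?thesis
    unfolding a_seq_def by simp
qed

lemma a_seq_even: "even s \<Longrightarrow> s \<noteq> 0 \<Longrightarrow> a_seq s = 0"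
proof -
  assume "even s" "s \<noteq> 0"
  then have "s + 1 \<noteq> 2 ^ k" for k :: nat
    by (cases k) (simp_all, presburger)
  then show ?thesis
    unfolding a_seq_def by auto
qed

definition hankel_mat :: "nat \<Rightarrow> nat \<Rightarrow> int mat" where
  "hankel_mat n m = mat n n (\<lambda>(i, j). a_seq (i + j + m))"

lemma hankel_d_eq_det: "hankel_d n m = det (hankel_mat n m)"
  unfolding hankel_d_def hankel_mat_def ..

lemma hankel_mat_carrier [simp]: "hankel_mat n m \<in> carrier_mat n n"
  unfolding hankel_mat_def by simp

lemma hankel_mat_index [simp]:
  "i < n \<Longrightarrow> j < n \<Longrightarrow> hankel_mat n m $$ (i, j) = a_seq (i + j + m)"
  unfolding hankel_mat_def by simp

lemma hankel_mat_eq_0: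
  "i < n \<Longrightarrow> j < n \<Longrightarrow> even (i + j + m) \<Longrightarrow> i + j + m \<noteq> 0 \<Longrightarrow> hankel_mat n m $$ (i, j) = 0"
  by (simp add: a_seq_even)

lemma hankel_mat_interleaved_block:
  assumes f: "\<And>i. i < k \<Longrightarrow> f i = 2 * i + r \<and> f i < n"
    and g: "\<And>j. j < k \<Longrightarrow> g j = 2 * j + s \<and> g j < n"
    and shift: "r + s + l = 2 * m + 1"
  shows "mat k k (\<lambda>(i, j). hankel_mat n l $$ (f i, g j)) = hankel_mat k m"
proof (rule eq_matI)
  fix i j assume "i < dim_row (hankel_mat k m)" "j < dim_col (hankel_mat k m)"
  then have ij: "i < k" "j < k"
    by (simp_all add: hankel_mat_def)
  have "f i + g j + l = 2 * (i + j + m) + 1"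
    using ij f[of i] g[of j] shift by simp
  moreover have "f i < n" "g j < n"
    using ij f g by blast+
  ultimately have "hankel_mat n l $$ (f i, g j) = a_seq (i + j + m)"
    using a_seq_odd[of "i + j + m"] by simp
  then show "mat k k (\<lambda>(i, j). hankel_mat n l $$ (f i, g j)) $$ (i, j) = hankel_mat k m $$ (i, j)"
    using ij by simp
qed (simp_all add: hankel_mat_def)

lemma abs_hankel_d_odd_shift:
  "\<bar>hankel_d n (2 * m + 1)\<bar> = \<bar>hankel_d ((n + 1) div 2) m\<bar> * \<bar>hankel_d (n div 2) (m + 1)\<bar>"
proof -
  let ?H = "hankel_mat n (2 * m + 1)" and ?p = "evens_first n" and ?k = "(n + 1) div 2"
  have k: "?k + n div 2 = n"
    by presburger
  then have n_k: "n - ?k = n div 2"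
    by linarith
  have "\<bar>det ?H\<bar> = \<bar>det (mat ?k ?k (\<lambda>(i, j). ?H $$ (?p i, ?p j)))\<bar>
      * \<bar>det (mat (n - ?k) (n - ?k) (\<lambda>(i, j). ?H $$ (?p (?k + i), ?p (?k + j))))\<bar>"
  proof (rule abs_det_block_triangular[OF hankel_mat_carrier evens_first_permutes evens_first_permutes])
    fix i j assume ij: "i < ?k" "?k \<le> j" "j < n"
    have "?p i = 2 * i" "?p j = 2 * (j - ?k) + 1"
      using ij evens_first_low evens_first_high[of ?k n "j - ?k"] by simp_all
    with ij k show "?H $$ (?p i, ?p j) = 0"
      by (intro hankel_mat_eq_0 evens_first_less) auto
  qed (use k in linarith)
  also have "mat ?k ?k (\<lambda>(i, j). ?H $$ (?p i, ?p j)) = hankel_mat ?k m"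
    by (rule hankel_mat_interleaved_block[where r = 0 and s = 0])
      (use k in \<open>auto simp: evens_first_low intro: evens_first_less\<close>)
  also have "mat (n - ?k) (n - ?k) (\<lambda>(i, j). ?H $$ (?p (?k + i), ?p (?k + j)))
      = hankel_mat (n div 2) (m + 1)"
    unfolding n_k
    by (rule hankel_mat_interleaved_block[where r = 1 and s = 1])
      (use k in \<open>auto simp: evens_first_high intro: evens_first_less\<close>)
  finally show ?thesis
    by (simp add: hankel_d_eq_det)
qed

lemma abs_hankel_d_even_even:
  "\<bar>hankel_d (2 * k) (2 * m)\<bar> = \<bar>hankel_d k m\<bar> ^ 2"
proof -
  let ?H = "hankel_mat (2 * k) (2 * m)" and ?p = "odds_first (2 * k)" and ?q = "evens_first (2 * k)"
  have size: "2 * k - k = k"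
    by simp
  have "\<bar>det ?H\<bar> = \<bar>det (mat k k (\<lambda>(i, j). ?H $$ (?p i, ?q j)))\<bar>
      * \<bar>det (mat (2 * k - k) (2 * k - k) (\<lambda>(i, j). ?H $$ (?p (k + i), ?q (k + j))))\<bar>"
  proof (rule abs_det_block_triangular[OF hankel_mat_carrier odds_first_permutes evens_first_permutes])
    fix i j assume ij: "i < k" "k \<le> j" "j < 2 * k"
    have "?p i = 2 * i + 1" "?q j = 2 * (j - k) + 1"
      using ij odds_first_low evens_first_high[of k "2 * k" "j - k"] by simp_all
    with ij show "?H $$ (?p i, ?q j) = 0"
      by (intro hankel_mat_eq_0 evens_first_less odds_first_less) auto
  qed simp
  also have "mat k k (\<lambda>(i, j). ?H $$ (?p i, ?q j)) = hankel_mat k m"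
    by (rule hankel_mat_interleaved_block[where r = 1 and s = 0])
      (auto simp: odds_first_low evens_first_low intro: odds_first_less evens_first_less)
  also have "mat (2 * k - k) (2 * k - k) (\<lambda>(i, j). ?H $$ (?p (k + i), ?q (k + j))) = hankel_mat k m"
    unfolding size
    by (rule hankel_mat_interleaved_block[where r = 0 and s = 1])
      (auto simp: odds_first_high evens_first_high intro: odds_first_less evens_first_less)
  finally show ?thesis
    by (simp add: hankel_d_eq_det power2_eq_square)
qed

lemma hankel_d_odd_even_eq_0:
  assumes "m \<ge> 1"
  shows "hankel_d (2 * k + 1) (2 * m) = 0"
  unfolding hankel_d_eq_det
proof (rule det_eq_0_if_rows_in_fewer_columns[of _ _ "(\<lambda>i. 2 * i) ` {..k}" "(\<lambda>j. 2 * j + 1) ` {..<k}"])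
  show "card ((\<lambda>j. 2 * j + 1) ` {..<k}) < card ((\<lambda>i. 2 * i) ` {..k})"
    by (simp add: card_image inj_on_def)
  fix i j assume i: "i \<in> (\<lambda>i. 2 * i) ` {..k}" and j: "j < 2 * k + 1" "j \<notin> (\<lambda>j. 2 * j + 1) ` {..<k}"
  have "even j"
  proof (rule ccontr)
    assume "odd j"
    then have "j = 2 * (j div 2) + 1" "j div 2 < k"
      using j(1) by presburger+
    with j(2) show False by blast
  qed
  with i j(1) assms show "hankel_mat (2 * k + 1) (2 * m) $$ (i, j) = 0"
    by (intro hankel_mat_eq_0) auto
qed auto

lemma abs_hankel_d_odd_0:
  "\<bar>hankel_d (2 * k + 1) 0\<bar> = \<bar>hankel_d k 1\<bar> ^ 2"
proof -
  let ?n = "2 * k + 1"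
  let ?H = "hankel_mat ?n 0" and ?p = "evens_first ?n" and ?q = "odds_first ?n"
  let ?B = "mat (k + 1) (k + 1) (\<lambda>(i, j). ?H $$ (?p i, ?q j))"
  have size: "?n - (k + 1) = k"
    by simp
  have q_k: "?q k = 0"
    using odds_first_high[of k ?n 0] by simp
  have "\<bar>det ?H\<bar> = \<bar>det ?B\<bar>
      * \<bar>det (mat (?n - (k + 1)) (?n - (k + 1)) (\<lambda>(i, j). ?H $$ (?p (k + 1 + i), ?q (k + 1 + j))))\<bar>"
  proof (rule abs_det_block_triangular[OF hankel_mat_carrier evens_first_permutes odds_first_permutes])
    fix i j assume ij: "i < k + 1" "k + 1 \<le> j" "j < ?n"
    have "?p i = 2 * i" "?q j = 2 * (j - k)"
      using ij evens_first_low odds_first_high[of k ?n "j - k"] by simp_all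
    with ij show "?H $$ (?p i, ?q j) = 0"
      by (intro hankel_mat_eq_0 evens_first_less odds_first_less) auto
  qed simp
  also have "mat (?n - (k + 1)) (?n - (k + 1)) (\<lambda>(i, j). ?H $$ (?p (k + 1 + i), ?q (k + 1 + j)))
      = hankel_mat k 1"
    unfolding size
  proof (rule hankel_mat_interleaved_block[where r = 1 and s = 2])
    fix i assume "i < k"
    then show "?p (k + 1 + i) = 2 * i + 1 \<and> ?p (k + 1 + i) < ?n"
      using evens_first_high[of "k + 1" ?n i] by (auto intro: evens_first_less)
  next
    fix j assume "j < k"
    then show "?q (k + 1 + j) = 2 * j + 2 \<and> ?q (k + 1 + j) < ?n"
      using odds_first_high[of k ?n "j + 1"] by (auto intro: odds_first_less)
  qed simp
  also have "\<bar>det ?B\<bar> = \<bar>det (mat_delete ?B 0 k)\<bar>"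
  proof -
    txt \<open>The last column of \<open>?B\<close> is column 0 of the Hankel matrix on the even rows,
      i.e. \<open>a (2i)\<close>, which is the first unit vector.\<close>
    have "?B $$ (i, k) = (if i = 0 then 1 else 0)" if "i < k + 1" for i
      using that q_k evens_first_low[of i ?n] by (auto simp: a_seq_even)
    then have "det ?B = (-1) ^ k * det (mat_delete ?B 0 k)"
      by (subst det_unit_column[of _ "k + 1" 0 k]) auto
    then show ?thesis
      by (simp add: abs_mult)
  qed
  also have "mat_delete ?B 0 k = mat k k (\<lambda>(i, j). ?H $$ (?p (Suc i), ?q j))"
    by (rule eq_matI) (auto simp: mat_delete_def)
  also have "\<dots> = hankel_mat k 1"
    by (rule hankel_mat_interleaved_block[where r = 2 and s = 1])
      (auto simp: evens_first_low odds_first_low intro: evens_first_less odds_first_less)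
  finally show ?thesis
    by (simp add: hankel_d_eq_det power2_eq_square)
qed

lemma abs_hankel_d_shift_0_1: "\<bar>hankel_d n 0\<bar> = 1 \<and> \<bar>hankel_d n 1\<bar> = 1"
proof (induction n rule: less_induct)
  case (less n)
  show ?case
  proof (cases "n = 0")
    case True
    then show ?thesis
      by (simp add: hankel_d_def)
  next
    case False
    have shift_0: "\<bar>hankel_d n 0\<bar> = 1"
    proof (cases "even n")
      case True
      then obtain k where "n = 2 * k" by blast
      with \<open>n \<noteq> 0\<close> less show ?thesis
        using abs_hankel_d_even_even[of k 0] by simp
    next
      case False
      then obtain k where "n = 2 * k + 1" using oddE by blast
      with less show ?thesis
        using abs_hankel_d_odd_0[of k] by simp
    qed
    have "\<bar>hankel_d ((n + 1) div 2) 0\<bar> = 1"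
      using shift_0 less \<open>n \<noteq> 0\<close> by (cases "n = 1") simp_all
    moreover have "\<bar>hankel_d (n div 2) 1\<bar> = 1"
      using less \<open>n \<noteq> 0\<close> by simp
    ultimately show ?thesis
      using shift_0 abs_hankel_d_odd_shift[of n 0] by simp
  qed
qed

lemma dvd_or_dvd_add_odd_iff:
  fixes M n m :: nat
  assumes "2 \<le> M"
  shows "(2 * M dvd n \<or> 2 * M dvd n + (2 * m + 1)) \<longleftrightarrow>
    (M dvd (n + 1) div 2 \<or> M dvd (n + 1) div 2 + m) \<and> (M dvd n div 2 \<or> M dvd n div 2 + (m + 1))"
proof -
  have not_both: "\<not> (M dvd x \<and> M dvd x + 1)" for x
    using assms dvd_add_right_iff[of M x 1] by auto
  show ?thesis
  proof (cases "even n")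
    case True
    then obtain k where n: "n = 2 * k" by blast
    have "odd (n + (2 * m + 1))"
      using n by simp
    then have "\<not> 2 * M dvd n + (2 * m + 1)"
      using dvd_mult_left[of 2 M] by blast
    then have "(2 * M dvd n \<or> 2 * M dvd n + (2 * m + 1)) \<longleftrightarrow> M dvd k"
      using n by simp
    also have "\<dots> \<longleftrightarrow> (M dvd k \<or> M dvd k + m) \<and> (M dvd k \<or> M dvd k + (m + 1))"
      using not_both[of "k + m"] by (auto simp: add.assoc)
    finally show ?thesis
      using n by simp
  next
    case False
    then obtain k where n: "n = 2 * k + 1" using oddE by blast
    have "\<not> 2 * M dvd n"
      using False dvd_mult_left[of 2 M] by blast
    moreover have "2 * M dvd n + (2 * m + 1) \<longleftrightarrow> 2 * M dvd 2 * (k + 1 + m)"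
      using n by simp
    moreover have "\<dots> \<longleftrightarrow> M dvd k + 1 + m"
      by (rule nat_mult_dvd_cancel1) simp
    ultimately have "(2 * M dvd n \<or> 2 * M dvd n + (2 * m + 1)) \<longleftrightarrow> M dvd k + 1 + m"
      by blast
    also have "\<dots> \<longleftrightarrow> (M dvd k + 1 \<or> M dvd k + 1 + m) \<and> (M dvd k \<or> M dvd k + (m + 1))"
      using not_both[of k] by (auto simp: algebra_simps)
    finally show ?thesis
      using n by simp
  qed
qed

lemma abs_hankel_d_even_shift_step:
  assumes IH: "\<And>k. \<bar>hankel_d k m\<bar> = (if M dvd k \<or> M dvd k + m then 1 else 0)" and "m \<ge> 1"
  shows "\<bar>hankel_d n (2 * m)\<bar> = (if 2 * M dvd n \<or> 2 * M dvd n + 2 * m then 1 else 0)"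
proof (cases "even n")
  case True
  then obtain k where n: "n = 2 * k" by blast
  have "2 * M dvd n + 2 * m \<longleftrightarrow> 2 * M dvd 2 * (k + m)"
    using n by simp
  also have "\<dots> \<longleftrightarrow> M dvd k + m"
    by (rule nat_mult_dvd_cancel1) simp
  finally have "2 * M dvd n + 2 * m \<longleftrightarrow> M dvd k + m" .
  then show ?thesis
    using n IH[of k] abs_hankel_d_even_even[of k m] by (simp add: power2_eq_square)
next
  case False
  then obtain k where n: "n = 2 * k + 1" using oddE by blast
  have "odd (n + 2 * m)"
    using False by simp
  then have "\<not> (2 * M dvd n \<or> 2 * M dvd n + 2 * m)"
    using False dvd_mult_left[of 2 M] by blast
  then show ?thesis
    using n hankel_d_odd_even_eq_0[OF \<open>m \<ge> 1\<close>] by simp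
qed

lemma abs_hankel_d_odd_shift_step:
  assumes "2 \<le> M"
    and IH: "\<And>k. \<bar>hankel_d k m\<bar> = (if M dvd k \<or> M dvd k + m then 1 else 0)"
    and IH_Suc: "\<And>k. \<bar>hankel_d k (m + 1)\<bar> = (if M dvd k \<or> M dvd k + (m + 1) then 1 else 0)"
  shows "\<bar>hankel_d n (2 * m + 1)\<bar> =
    (if 2 * M dvd n \<or> 2 * M dvd n + (2 * m + 1) then 1 else 0)"
  using abs_hankel_d_odd_shift[of n m] dvd_or_dvd_add_odd_iff[OF assms(1), of n m] IH IH_Suc
  by simp

text \<open>The range \<open>m \<le> 2^e \<le> 2m\<close>, unlike \<open>2^e < 2m\<close>, is preserved when \<open>m\<close> is replaced
  by \<open>\<lfloor>m/2\<rfloor>\<close> or \<open>\<lceil>m/2\<rceil>\<close> and \<open>e\<close> by \<open>e - 1\<close>;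
  at its two ends (\<open>m\<close> a power of 2) the condition reads \<open>m dvd n\<close>.\<close>

lemma abs_hankel_d_pow2:
  assumes "m \<le> 2 ^ e" and "2 ^ e \<le> 2 * m"
  shows "\<bar>hankel_d n m\<bar> = (if 2 ^ e dvd n \<or> 2 ^ e dvd n + m then 1 else 0)"
  using assms
proof (induction m arbitrary: n e rule: less_induct)
  case (less m)
  have "0 < (2::nat) ^ e"
    by simp
  show ?case
  proof (cases "m = 1")
    case True
    then consider "2 ^ e = (1::nat)" | "2 ^ e = (2::nat)"
      using less.prems \<open>0 < 2 ^ e\<close> by linarith
    then have "2 ^ e dvd n \<or> 2 ^ e dvd n + m"
    proof cases
      case 1
      then show ?thesis by simp
    next
      case 2
      show ?thesis unfolding 2 True by presburger
    qed
    then show ?thesis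
      using True abs_hankel_d_shift_0_1 by simp
  next
    case not_1: False
    with less.prems obtain e' where e: "e = Suc e'"
      by (cases e) auto
    define M where "M = (2::nat) ^ e'"
    have bounds: "m \<le> 2 * M" "2 * M \<le> 2 * m" "0 < M"
      using less.prems unfolding M_def e by simp_all
    have IH: "\<bar>hankel_d k l\<bar> = (if M dvd k \<or> M dvd k + l then 1 else 0)"
      if "l < m" "l \<le> M" "M \<le> 2 * l" for k l
      using less.IH[of l e' k] that unfolding M_def by blast
    show ?thesis
    proof (cases "even m")
      case True
      then obtain m' where m: "m = 2 * m'" by blast
      with bounds not_1 have "1 \<le> m'" "m' < m" "m' \<le> M" "M \<le> 2 * m'"
        by simp_all
      then show ?thesis
        using abs_hankel_d_even_shift_step[of m' M n] IH unfolding m e M_def by simp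
    next
      case False
      then obtain m' where m: "m = 2 * m' + 1" using oddE by blast
      with bounds not_1 have "2 \<le> M"
        by simp
      then have "even M"
        unfolding M_def by (cases e') simp_all
      with bounds m have "m' < m" "m' \<le> M" "M \<le> 2 * m'" "m' + 1 < m" "m' + 1 \<le> M" "M \<le> 2 * (m' + 1)"
        by presburger+
      then show ?thesis
        using abs_hankel_d_odd_shift_step[OF \<open>2 \<le> M\<close>, of m' n] IH unfolding m e M_def by simp
    qed
  qed
qed

lemma cong_iff_dvd_nat:
  "[int n = 0] (mod int M) \<longleftrightarrow> M dvd n" "[int n = - int m] (mod int M) \<longleftrightarrow> M dvd n + m"
  by (simp_all add: cong_0_iff cong_iff_dvd_diff flip: of_nat_add)

theorem theorem3p1:
  fixes m K n :: nat
  assumes "1 \<le> (2::nat) ^ K" and "2 ^ K < m" and "m \<le> 2 ^ (K + 1)"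
  shows "(([int n = 0] (mod 2 ^ (K + 1)) \<or> [int n = - int m] (mod 2 ^ (K + 1)))
            \<longrightarrow> hankel_d n m \<in> {1, -1})
       \<and> (\<not> ([int n = 0] (mod 2 ^ (K + 1)) \<or> [int n = - int m] (mod 2 ^ (K + 1)))
            \<longrightarrow> hankel_d n m = 0)"
proof -
  have pow: "(2::int) ^ (K + 1) = int (2 ^ (K + 1))"
    by simp
  have "\<bar>hankel_d n m\<bar> = (if 2 ^ (K + 1) dvd n \<or> 2 ^ (K + 1) dvd n + m then 1 else 0)"
    using assms by (intro abs_hankel_d_pow2) auto
  moreover have "[int n = 0] (mod 2 ^ (K + 1)) \<or> [int n = - int m] (mod 2 ^ (K + 1)) \<longleftrightarrow>
      2 ^ (K + 1) dvd n \<or> 2 ^ (K + 1) dvd n + m"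
    unfolding pow cong_iff_dvd_nat ..
  ultimately show ?thesis
    by (auto simp: abs_if split: if_splits)
qed

end
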